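(* Let $G$ be a connected graph with $n\ge2$ nodes and diameter $D$, with nonnegative integer loads, and run Algorithm 2. If the discrepancy of $G$ at the beginning of some round is $K\ge 2D$, then after that round the potential $p(G)$ has decreased by at least $K^2/(8D)$.
   Context: $G=(V,E)$ is an undirected connected graph, $n=|V|$, $D$ its diameter; each node $u$ holds an integer load $load(u)\ge 0$. $L_{max},L_{min}$ denote the current maximum and minimum load, the discrepancy is $K=L_{max}-L_{min}$, $L_{avg}$ the average load (invariant under transfers), and the potential is $p(G)=\sum_{u\in V}(load(u)-L_{avg})^2$. Algorithm 2 (single proposal, discrete) proceeds in synchronous rounds; in each round, using the loads at the start of the round: (1) every node $u$ having at least one neighbor $v$ with $load(v)\le load(u)-2$ picks the first neighbor $v$ (in a fixed order of its neighbors) maximizing $load(u)-load(v)$ and sends $v$ a proposal of value $p_{uv}=\lfloor (load(u)-load(v))/2\rfloor$; (2) every node that received at least one proposal accepts exactly one proposal of maximum value; (3) all accepted transfers are executed simultaneously (each accepted proposal $p_{wu}$ moves $p_{wu}$ from $w$ to $u$), and nodes report their new loads to neighbors. *)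

theory Defs
  imports Complex_Main
begin

definition is_graph :: "'a set \<Rightarrow> ('a \<Rightarrow> 'a \<Rightarrow> bool) \<Rightarrow> bool" where
  "is_graph V E \<longleftrightarrow> finite V \<and> (\<forall>u v. E u v \<longrightarrow> u \<in> V \<and> v \<in> V) \<and>
     (\<forall>u v. E u v \<longrightarrow> E v u) \<and> (\<forall>u. \<not> E u u)"

definition walk :: "'a set \<Rightarrow> ('a \<Rightarrow> 'a \<Rightarrow> bool) \<Rightarrow> 'a \<Rightarrow> 'a \<Rightarrow> nat \<Rightarrow> bool" where
  "walk V E u v k \<longleftrightarrow> (\<exists>xs. length xs = Suc k \<and> hd xs = u \<and> last xs = v \<and> set xs \<subseteq> V \<and>
      (\<forall>i < k. E (xs ! i) (xs ! Suc i)))"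

definition connected_graph :: "'a set \<Rightarrow> ('a \<Rightarrow> 'a \<Rightarrow> bool) \<Rightarrow> bool" where
  "connected_graph V E \<longleftrightarrow> (\<forall>u\<in>V. \<forall>v\<in>V. \<exists>k. walk V E u v k)"

definition gdist :: "'a set \<Rightarrow> ('a \<Rightarrow> 'a \<Rightarrow> bool) \<Rightarrow> 'a \<Rightarrow> 'a \<Rightarrow> nat" where
  "gdist V E u v = (LEAST k. walk V E u v k)"

definition diameter :: "'a set \<Rightarrow> ('a \<Rightarrow> 'a \<Rightarrow> bool) \<Rightarrow> nat" where
  "diameter V E = Max {gdist V E u v | u v. u \<in> V \<and> v \<in> V}"

definition nbr_order :: "'a set \<Rightarrow> ('a \<Rightarrow> 'a \<Rightarrow> bool) \<Rightarrow> ('a \<Rightarrow> 'a list) \<Rightarrow> bool" where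
  "nbr_order V E nb \<longleftrightarrow> (\<forall>u\<in>V. distinct (nb u) \<and> set (nb u) = {v. E u v})"

(* Step (1): the neighbour u sends its proposal to, if any: the first neighbour
   (in the fixed order) maximizing l u - l v, provided some neighbour v has l v <= l u - 2. *)
definition target :: "('a \<Rightarrow> 'a list) \<Rightarrow> ('a \<Rightarrow> int) \<Rightarrow> 'a \<Rightarrow> 'a option" where
  "target nb l u =
     (if \<exists>v\<in>set (nb u). l v \<le> l u - 2
      then find (\<lambda>v. \<forall>w\<in>set (nb u). l u - l w \<le> l u - l v) (nb u)
      else None)"

definition pval :: "('a \<Rightarrow> int) \<Rightarrow> 'a \<Rightarrow> 'a \<Rightarrow> int" where
  "pval l u v = \<lfloor>real_of_int (l u - l v) / 2\<rfloor>"

(* Step (2): acc v = Some w means v accepts the proposal of w; acc v = None means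
   v received no proposal. Any tie-breaking among maximum-value proposals is allowed. *)
definition valid_accept :: "'a set \<Rightarrow> ('a \<Rightarrow> 'a list) \<Rightarrow> ('a \<Rightarrow> int) \<Rightarrow> ('a \<Rightarrow> 'a option) \<Rightarrow> bool" where
  "valid_accept V nb l acc \<longleftrightarrow>
     (\<forall>v\<in>V. (acc v \<noteq> None \<longleftrightarrow> (\<exists>u\<in>V. target nb l u = Some v)) \<and>
        (\<forall>w. acc v = Some w \<longrightarrow> w \<in> V \<and> target nb l w = Some v \<and>
             (\<forall>u\<in>V. target nb l u = Some v \<longrightarrow> pval l u v \<le> pval l w v)))"

definition round_step :: "('a \<Rightarrow> 'a list) \<Rightarrow> ('a \<Rightarrow> int) \<Rightarrow> ('a \<Rightarrow> 'a option) \<Rightarrow> 'a \<Rightarrow> int" where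
  "round_step nb l acc x =
     l x + (case acc x of Some w \<Rightarrow> pval l w x | None \<Rightarrow> 0)
         - (case target nb l x of Some v \<Rightarrow> (if acc v = Some x then pval l x v else 0) | None \<Rightarrow> 0)"

definition avg_load :: "'a set \<Rightarrow> ('a \<Rightarrow> int) \<Rightarrow> real" where
  "avg_load V l = (\<Sum>u\<in>V. real_of_int (l u)) / real (card V)"

definition potential :: "'a set \<Rightarrow> ('a \<Rightarrow> int) \<Rightarrow> real" where
  "potential V l = (\<Sum>u\<in>V. (real_of_int (l u) - avg_load V l)\<^sup>2)"

definition discrepancy :: "'a set \<Rightarrow> ('a \<Rightarrow> int) \<Rightarrow> int" where
  "discrepancy V l = Max (l ` V) - Min (l ` V)"

end

theory Submission
  imports Defs
begin

text \<open>
  Every accepted transfer of \<open>p = \<lfloor>(l w - l v)/2\<rfloor>\<close> from \<open>w\<close> to \<open>v\<close> lowers the sum of squares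
  by \<open>2 p (l w - l v - p) \<ge> (l w - l v)\<^sup>2/2 - O(1)\<close>; a node that both sends and receives only
  does better, and the sum of loads is preserved, so the potential drops by at least the sum of
  these gains. Let \<open>m\<^sub>j\<close> be the minimum load within distance \<open>j\<close> of a maximally loaded node, and
  \<open>\<epsilon>\<^sub>j = m\<^sub>j - m\<^sub>j\<^sub>+\<^sub>1\<close>, so that \<open>\<Sum>\<^sub>j\<^sub><\<^sub>D \<epsilon>\<^sub>j = K\<close>. If \<open>\<epsilon>\<^sub>j \<ge> 2\<close>, a node of load \<open>m\<^sub>j\<^sub>+\<^sub>1\<close> has a
  neighbour of load at least \<open>m\<^sub>j\<close>, whose proposal goes to a node of load \<open>m\<^sub>j\<^sub>+\<^sub>1\<close>; that node
  accepts a proposal at least as large, with gain at least \<open>\<epsilon>\<^sub>j\<^sup>2/8\<close>. These receivers are distinct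
  for distinct \<open>j\<close>, and since \<open>K \<ge> 2D\<close> convexity gives \<open>\<Sum>\<^bsub>\<epsilon>\<^sub>j \<ge> 2\<^esub> \<epsilon>\<^sub>j\<^sup>2 \<ge> K\<^sup>2/D\<close>.
\<close>

lemma pval_eq_div: "pval l u v = (l u - l v) div 2"
  unfolding pval_def using floor_divide_of_int_eq[of "l u - l v" 2] by simp

lemma target_SomeD:
  assumes "target nb l u = Some t"
  shows "t \<in> set (nb u) \<and> l t \<le> l u - 2 \<and> (\<forall>w\<in>set (nb u). l t \<le> l w)"
proof -
  have ex: "\<exists>v\<in>set (nb u). l v \<le> l u - 2"
    using assms unfolding target_def by (auto split: if_splits)
  then have "find (\<lambda>v. \<forall>w\<in>set (nb u). l u - l w \<le> l u - l v) (nb u) = Some t"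
    using assms unfolding target_def by auto
  then have "t \<in> set (nb u) \<and> (\<forall>w\<in>set (nb u). l u - l w \<le> l u - l t)"
    unfolding find_Some_iff by auto
  with ex show ?thesis by force
qed

lemma target_neq_None:
  assumes "v \<in> set (nb u)" and "l v \<le> l u - 2"
  shows "target nb l u \<noteq> None"
proof -
  have "Min (l ` set (nb u)) \<in> l ` set (nb u)" using assms(1) by (intro Min_in) auto
  then obtain m where m: "m \<in> set (nb u)" "l m = Min (l ` set (nb u))" by auto
  then have "\<forall>w\<in>set (nb u). l u - l w \<le> l u - l m" by simp
  then have "find (\<lambda>v. \<forall>w\<in>set (nb u). l u - l w \<le> l u - l v) (nb u) \<noteq> None"
    using m(1) unfolding find_None_iff by blast
  then show ?thesis using assms unfolding target_def by auto
qed

lemma target_edge: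
  assumes "nbr_order V E nb" and "u \<in> V" and "target nb l u = Some t"
  shows "E u t"
  using assms target_SomeD[OF assms(3)] unfolding nbr_order_def by auto

lemma accepted_targetD:
  assumes "valid_accept V nb l acc" and "v \<in> V" and "acc v = Some w"
  shows "w \<in> V \<and> target nb l w = Some v"
  using assms unfolding valid_accept_def by auto

(* (l w - p)^2 + (l v + p)^2 = l w^2 + l v^2 - 2 p (l w - l v - p) for the transfer p accepted by v *)
definition transfer_gain :: "('a \<Rightarrow> int) \<Rightarrow> ('a \<Rightarrow> 'a option) \<Rightarrow> 'a \<Rightarrow> int" where
  "transfer_gain l acc v =
     (case acc v of Some w \<Rightarrow> 2 * pval l w v * (l w - l v - pval l w v) | None \<Rightarrow> 0)"

lemma accepted_load_gap:
  assumes "valid_accept V nb l acc" and "v \<in> V" and "acc v = Some w"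
  shows "l v \<le> l w - 2"
  using target_SomeD[of nb l w v] accepted_targetD[OF assms] by simp

lemma transfer_gain_nonneg:
  assumes "valid_accept V nb l acc" and "v \<in> V"
  shows "transfer_gain l acc v \<ge> 0"
  using accepted_load_gap[OF assms] unfolding transfer_gain_def
  by (cases "acc v") (simp_all add: pval_eq_div)

section \<open>Effect of a round on the potential\<close>

lemma sum_case_option_eq_sum_if:
  fixes g :: "'a \<Rightarrow> 'b \<Rightarrow> 'c::comm_monoid_add"
  assumes "finite B" and "\<And>x y. x \<in> A \<Longrightarrow> f x = Some y \<Longrightarrow> y \<in> B"
  shows "(\<Sum>x\<in>A. case f x of Some y \<Rightarrow> g x y | None \<Rightarrow> 0)
       = (\<Sum>x\<in>A. \<Sum>y\<in>B. if f x = Some y then g x y else 0)"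
proof (rule sum.cong)
  fix x assume "x \<in> A"
  then show "(case f x of Some y \<Rightarrow> g x y | None \<Rightarrow> 0)
           = (\<Sum>y\<in>B. if f x = Some y then g x y else 0)"
    using assms by (cases "f x") simp_all
qed simp

lemma sum_sent_eq_sum_received:
  fixes F :: "'a \<Rightarrow> 'a \<Rightarrow> 'b::comm_monoid_add"
  assumes G: "is_graph V E" and NB: "nbr_order V E nb" and VA: "valid_accept V nb l acc"
  shows "(\<Sum>x\<in>V. case target nb l x of
            Some v \<Rightarrow> (if acc v = Some x then F x v else 0) | None \<Rightarrow> 0)
       = (\<Sum>v\<in>V. case acc v of Some w \<Rightarrow> F w v | None \<Rightarrow> 0)"
proof -
  have fin: "finite V" using G unfolding is_graph_def by simp
  have target_in: "v \<in> V" if "x \<in> V" "target nb l x = Some v" for x v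
    using target_edge[OF NB that] G unfolding is_graph_def by blast
  have "(\<Sum>x\<in>V. case target nb l x of
            Some v \<Rightarrow> (if acc v = Some x then F x v else 0) | None \<Rightarrow> 0)
      = (\<Sum>x\<in>V. \<Sum>v\<in>V. if target nb l x = Some v then (if acc v = Some x then F x v else 0) else 0)"
    using sum_case_option_eq_sum_if[OF fin target_in] .
  also have "\<dots> = (\<Sum>x\<in>V. \<Sum>v\<in>V. if acc v = Some x then F x v else 0)"
    by (intro sum.cong refl) (use accepted_targetD[OF VA] in fastforce)
  also have "\<dots> = (\<Sum>v\<in>V. \<Sum>x\<in>V. if acc v = Some x then F x v else 0)"
    by (rule sum.swap)
  also have "\<dots> = (\<Sum>v\<in>V. case acc v of Some w \<Rightarrow> F w v | None \<Rightarrow> 0)"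
    using sum_case_option_eq_sum_if[OF fin, of V acc "\<lambda>v w. F w v"] accepted_targetD[OF VA]
    by presburger
  finally show ?thesis .
qed

lemma round_step_sum:
  assumes "is_graph V E" and "nbr_order V E nb" and "valid_accept V nb l acc"
  shows "(\<Sum>x\<in>V. round_step nb l acc x) = (\<Sum>x\<in>V. l x)"
  using sum_sent_eq_sum_received[OF assms, of "pval l"]
  unfolding round_step_def by (simp add: sum.distrib sum_subtractf)

lemma square_add_diff_le:
  fixes x a b :: "'a::linordered_idom"
  assumes "0 \<le> a" and "0 \<le> b"
  shows "(x + a - b)\<^sup>2 \<le> x\<^sup>2 + (2 * x * a + a\<^sup>2) - (2 * x * b - b\<^sup>2)"
proof -
  have "(x + a - b)\<^sup>2 = x\<^sup>2 + (2 * x * a + a\<^sup>2) - (2 * x * b - b\<^sup>2) - 2 * (a * b)"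
    by (simp add: power2_eq_square algebra_simps)
  then show ?thesis using assms by simp
qed

lemma round_step_sum_squares:
  assumes G: "is_graph V E" and NB: "nbr_order V E nb" and VA: "valid_accept V nb l acc"
  shows "(\<Sum>x\<in>V. (round_step nb l acc x)\<^sup>2) + (\<Sum>v\<in>V. transfer_gain l acc v)
       \<le> (\<Sum>x\<in>V. (l x)\<^sup>2)"
proof -
  define IN where "IN x = (case acc x of Some w \<Rightarrow> pval l w x | None \<Rightarrow> 0)" for x
  define OUT where "OUT x = (case target nb l x of
      Some v \<Rightarrow> (if acc v = Some x then pval l x v else 0) | None \<Rightarrow> 0)" for x
  \<comment> \<open>\<open>R x\<close> and \<open>S x\<close> are the changes of \<open>(l x)\<^sup>2\<close> by receiving alone and by sending alone\<close>
  define R where "R x = (case acc x of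
      Some w \<Rightarrow> 2 * l x * pval l w x + (pval l w x)\<^sup>2 | None \<Rightarrow> 0)" for x
  define S where "S x = (case target nb l x of
      Some v \<Rightarrow> (if acc v = Some x then 2 * l x * pval l x v - (pval l x v)\<^sup>2 else 0)
    | None \<Rightarrow> 0)" for x
  have IN_nonneg: "0 \<le> IN x" if "x \<in> V" for x
    using accepted_load_gap[OF VA that] unfolding IN_def
    by (cases "acc x") (simp_all add: pval_eq_div)
  have OUT_nonneg: "0 \<le> OUT x" for x
    using target_SomeD[of nb l x] unfolding OUT_def
    by (cases "target nb l x") (auto simp: pval_eq_div)
  have "(round_step nb l acc x)\<^sup>2 \<le> (l x)\<^sup>2 + R x - S x" if "x \<in> V" for x
  proof -
    have "2 * l x * IN x + (IN x)\<^sup>2 = R x"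
      unfolding IN_def R_def by (cases "acc x") simp_all
    moreover have "2 * l x * OUT x - (OUT x)\<^sup>2 = S x"
      unfolding OUT_def S_def by (cases "target nb l x") simp_all
    ultimately show ?thesis
      using square_add_diff_le[OF IN_nonneg[OF that] OUT_nonneg, of "l x" x]
      unfolding round_step_def IN_def OUT_def by simp
  qed
  then have "(\<Sum>x\<in>V. (round_step nb l acc x)\<^sup>2) \<le> (\<Sum>x\<in>V. (l x)\<^sup>2 + R x - S x)"
    by (rule sum_mono)
  also have "\<dots> = (\<Sum>x\<in>V. (l x)\<^sup>2) + (\<Sum>x\<in>V. R x - S x)"
    by (simp add: sum.distrib sum_subtractf)
  also have "(\<Sum>x\<in>V. R x - S x) = - (\<Sum>v\<in>V. transfer_gain l acc v)"
  proof -
    define S' where "S' v = (case acc v of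
        Some w \<Rightarrow> 2 * l w * pval l w v - (pval l w v)\<^sup>2 | None \<Rightarrow> 0)" for v
    have "(\<Sum>x\<in>V. S x) = (\<Sum>v\<in>V. S' v)"
      unfolding S_def S'_def by (rule sum_sent_eq_sum_received[OF G NB VA])
    then have "(\<Sum>x\<in>V. R x - S x) = (\<Sum>v\<in>V. R v - S' v)"
      by (simp add: sum_subtractf)
    also have "\<dots> = (\<Sum>v\<in>V. - transfer_gain l acc v)"
      unfolding R_def S'_def transfer_gain_def
      by (intro sum.cong refl) (simp split: option.split add: power2_eq_square algebra_simps)
    finally show ?thesis by (simp add: sum_negf)
  qed
  finally show ?thesis by simp
qed

lemma potential_diff_eq:
  assumes "(\<Sum>x\<in>V. l' x) = (\<Sum>x\<in>V. l x)"
  shows "potential V l - potential V l' = real_of_int ((\<Sum>x\<in>V. (l x)\<^sup>2) - (\<Sum>x\<in>V. (l' x)\<^sup>2))"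
proof -
  have expand: "potential V f = (\<Sum>u\<in>V. (real_of_int (f u))\<^sup>2)
      - 2 * avg_load V f * (\<Sum>u\<in>V. real_of_int (f u)) + real (card V) * (avg_load V f)\<^sup>2"
    for f :: "'a \<Rightarrow> int"
  proof -
    have "potential V f = (\<Sum>u\<in>V. (real_of_int (f u))\<^sup>2
        - 2 * avg_load V f * real_of_int (f u) + (avg_load V f)\<^sup>2)"
      unfolding potential_def by (intro sum.cong) (simp_all add: power2_diff algebra_simps)
    then show ?thesis by (simp add: sum.distrib sum_subtractf sum_distrib_left)
  qed
  have sums: "(\<Sum>u\<in>V. real_of_int (l' u)) = (\<Sum>u\<in>V. real_of_int (l u))"
    using assms by (metis of_int_sum)
  then have "avg_load V l' = avg_load V l" unfolding avg_load_def by simp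
  then show ?thesis unfolding expand[of l] expand[of l'] sums by simp
qed

lemma potential_decrease_ge_sum_gain:
  assumes "is_graph V E" and "nbr_order V E nb" and "valid_accept V nb l acc"
  shows "potential V l - potential V (round_step nb l acc)
       \<ge> real_of_int (\<Sum>v\<in>V. transfer_gain l acc v)"
  using round_step_sum_squares[OF assms]
  unfolding potential_diff_eq[OF round_step_sum[OF assms]] by linarith

fun hop_ball :: "('a \<Rightarrow> 'a \<Rightarrow> bool) \<Rightarrow> 'a \<Rightarrow> nat \<Rightarrow> 'a set" where
  "hop_ball E u 0 = {u}"
| "hop_ball E u (Suc j) = hop_ball E u j \<union> {v. \<exists>z\<in>hop_ball E u j. E z v}"

lemma hop_ball_mono: "i \<le> j \<Longrightarrow> hop_ball E u i \<subseteq> hop_ball E u j"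
  by (induction j) (auto simp: le_Suc_eq)

lemma center_in_hop_ball: "u \<in> hop_ball E u j"
  using hop_ball_mono[of 0 j E u] by auto

lemma hop_ball_subset: "is_graph V E \<Longrightarrow> u \<in> V \<Longrightarrow> hop_ball E u j \<subseteq> V"
  by (induction j) (auto simp: is_graph_def)

lemma walk_end_in_hop_ball:
  assumes "walk V E u v k"
  shows "v \<in> hop_ball E u k"
proof -
  obtain xs where xs: "length xs = Suc k" "hd xs = u" "last xs = v"
      "\<forall>i < k. E (xs ! i) (xs ! Suc i)"
    using assms unfolding walk_def by auto
  have "xs ! i \<in> hop_ball E u i" if "i \<le> k" for i
    using that
  proof (induction i)
    case 0
    then show ?case using xs(1,2) hd_conv_nth[of xs] by fastforce
  next
    case (Suc i)
    moreover have "E (xs ! i) (xs ! Suc i)" using xs(4) Suc.prems by simp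
    ultimately show ?case by auto
  qed
  then show ?thesis using xs(1,3) last_conv_nth[of xs] by fastforce
qed

lemma hop_ball_diameter:
  assumes G: "is_graph V E" and "connected_graph V E" and u: "u \<in> V"
  shows "hop_ball E u (diameter V E) = V"
proof
  show "hop_ball E u (diameter V E) \<subseteq> V" by (rule hop_ball_subset[OF G u])
  show "V \<subseteq> hop_ball E u (diameter V E)"
  proof
    fix v assume v: "v \<in> V"
    then obtain k where "walk V E u v k" using assms(2) u unfolding connected_graph_def by blast
    then have shortest: "walk V E u v (gdist V E u v)" unfolding gdist_def by (rule LeastI)
    have "{gdist V E u v |u v. u \<in> V \<and> v \<in> V} = (\<lambda>(u, v). gdist V E u v) ` (V \<times> V)"
      by auto
    then have "finite {gdist V E u v |u v. u \<in> V \<and> v \<in> V}"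
      using G unfolding is_graph_def by simp
    moreover have "gdist V E u v \<in> {gdist V E u v |u v. u \<in> V \<and> v \<in> V}"
      using u v by blast
    ultimately have "gdist V E u v \<le> diameter V E"
      unfolding diameter_def by (rule Max_ge)
    then show "v \<in> hop_ball E u (diameter V E)"
      using walk_end_in_hop_ball[OF shortest] hop_ball_mono[of _ _ E u] by blast
  qed
qed

definition min_load :: "('a \<Rightarrow> 'a \<Rightarrow> bool) \<Rightarrow> ('a \<Rightarrow> int) \<Rightarrow> 'a \<Rightarrow> nat \<Rightarrow> int" where
  "min_load E l u j = Min (l ` hop_ball E u j)"

lemma finite_hop_ball:
  assumes "is_graph V E" and "u \<in> V"
  shows "finite (hop_ball E u j)"
  using assms(1) unfolding is_graph_def by (blast intro: finite_subset[OF hop_ball_subset[OF assms]])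

lemma min_load_antimono:
  assumes "is_graph V E" and "u \<in> V" and "i \<le> j"
  shows "min_load E l u j \<le> min_load E l u i"
proof -
  have "l ` hop_ball E u i \<subseteq> l ` hop_ball E u j"
    using hop_ball_mono[OF assms(3)] by (rule image_mono)
  moreover have "l ` hop_ball E u i \<noteq> {}" using center_in_hop_ball[of u E i] by blast
  moreover have "finite (l ` hop_ball E u j)" using finite_hop_ball[OF assms(1,2)] by simp
  ultimately show ?thesis unfolding min_load_def by (rule Min_antimono)
qed

section \<open>Gains caused by gaps between ball minima\<close>

lemma square_le_eight_halving_gain:
  fixes e d :: int
  assumes "2 \<le> e" and "e div 2 \<le> d div 2"
  shows "e\<^sup>2 \<le> 8 * (2 * (d div 2) * (d - d div 2))"
proof -
  define q where "q = e div 2"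
  define p where "p = d div 2"
  have "1 \<le> q" "q \<le> p" "p \<le> d - p" using assms unfolding q_def p_def by linarith+
  have "e\<^sup>2 \<le> (4 * q)\<^sup>2" using assms(1) unfolding q_def by (intro power_mono) linarith+
  also have "\<dots> = 16 * (q * q)" by (simp add: power2_eq_square)
  also have "\<dots> \<le> 16 * (p * (d - p))"
    using \<open>1 \<le> q\<close> \<open>q \<le> p\<close> \<open>p \<le> d - p\<close> by (intro mult_left_mono mult_mono) auto
  finally show ?thesis unfolding p_def by simp
qed

lemma min_load_gap_receiver:
  assumes G: "is_graph V E" and NB: "nbr_order V E nb" and VA: "valid_accept V nb l acc"
    and u: "u \<in> V"
    and e: "e = min_load E l u j - min_load E l u (Suc j)" and e2: "2 \<le> e"
  shows "\<exists>t\<in>V. l t = min_load E l u (Suc j) \<and> e\<^sup>2 \<le> 8 * transfer_gain l acc t"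
proof -
  define A where "A = hop_ball E u j"
  define B where "B = hop_ball E u (Suc j)"
  have finA: "finite A" and finB: "finite B"
    unfolding A_def B_def by (rule finite_hop_ball[OF G u])+
  have "B \<noteq> {}" unfolding B_def using center_in_hop_ball[of u E "Suc j"] by blast
  then have "Min (l ` B) \<in> l ` B" using finB by simp
  then obtain y where y: "y \<in> B" "l y = Min (l ` B)" by auto
  have "y \<notin> A"
  proof
    assume "y \<in> A"
    then have "Min (l ` A) \<le> l y" using finA by simp
    then show False using e2 y(2) unfolding e min_load_def A_def B_def by simp
  qed
  then obtain z where z: "z \<in> A" "E z y" using y(1) unfolding A_def B_def by auto
  have zV: "z \<in> V" using z(1) hop_ball_subset[OF G u] unfolding A_def by auto
  have lz: "Min (l ` A) \<le> l z" using z(1) finA by simp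
  have yn: "y \<in> set (nb z)" using NB zV z(2) unfolding nbr_order_def by auto
  have "l y \<le> l z - 2" using lz y(2) e2 unfolding e min_load_def A_def B_def by simp
  then obtain t where t: "target nb l z = Some t"
    using target_neq_None[where nb = nb and u = z, OF yn] by auto
  have Ezt: "E z t" by (rule target_edge[OF NB zV t])
  then have tV: "t \<in> V" using G unfolding is_graph_def by blast
  have "t \<in> B" using z(1) Ezt unfolding A_def B_def by auto
  then have "Min (l ` B) \<le> l t" using finB by simp
  moreover have "l t \<le> l y" using target_SomeD[OF t] yn by blast
  ultimately have lt: "l t = Min (l ` B)" using y(2) by simp
  \<comment> \<open>\<open>t\<close> received the proposal of \<open>z\<close>, so it accepts one of at least the same value\<close>
  obtain w where w: "acc t = Some w" using VA tV zV t unfolding valid_accept_def by blast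
  have "pval l z t \<le> pval l w t" using VA tV zV t w unfolding valid_accept_def by blast
  moreover have "e div 2 \<le> (l z - l t) div 2"
    using lz lt unfolding e min_load_def A_def B_def by (intro zdiv_mono1) simp_all
  ultimately have "e div 2 \<le> (l w - l t) div 2" by (simp add: pval_eq_div)
  from square_le_eight_halving_gain[OF e2 this]
  have "e\<^sup>2 \<le> 8 * transfer_gain l acc t" unfolding transfer_gain_def w by (simp add: pval_eq_div)
  then show ?thesis using tV lt unfolding min_load_def B_def by blast
qed

lemma sum_large_gaps_le_sum_gain:
  assumes G: "is_graph V E" and NB: "nbr_order V E nb" and VA: "valid_accept V nb l acc"
    and u: "u \<in> V"
  defines "gap j \<equiv> min_load E l u j - min_load E l u (Suc j)"
  shows "(\<Sum>j | j < D \<and> 2 \<le> gap j. (gap j)\<^sup>2) \<le> 8 * (\<Sum>v\<in>V. transfer_gain l acc v)"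
proof -
  define J where "J = {j. j < D \<and> 2 \<le> gap j}"
  have "\<forall>j\<in>J. \<exists>t\<in>V. l t = min_load E l u (Suc j) \<and> (gap j)\<^sup>2 \<le> 8 * transfer_gain l acc t"
    using min_load_gap_receiver[OF G NB VA u] unfolding J_def gap_def by blast
  then obtain r where r: "\<And>j. j \<in> J \<Longrightarrow> r j \<in> V \<and> l (r j) = min_load E l u (Suc j)
      \<and> (gap j)\<^sup>2 \<le> 8 * transfer_gain l acc (r j)"
    by (metis (no_types))
  have strict: "min_load E l u (Suc j) < min_load E l u (Suc i)" if "i < j" "j \<in> J" for i j
    using min_load_antimono[OF G u, of "Suc i" j l] that unfolding J_def gap_def by simp
  have "inj_on r J"
  proof (rule inj_onI)
    fix i j assume "i \<in> J" "j \<in> J" "r i = r j"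
    then have "min_load E l u (Suc i) = min_load E l u (Suc j)" using r by metis
    then show "i = j" using strict[of i j] strict[of j i] \<open>i \<in> J\<close> \<open>j \<in> J\<close>
      by (cases i j rule: linorder_cases) auto
  qed
  have "(\<Sum>j\<in>J. (gap j)\<^sup>2) \<le> (\<Sum>j\<in>J. 8 * transfer_gain l acc (r j))"
    using r by (intro sum_mono) blast
  also have "\<dots> = 8 * (\<Sum>v\<in>r ` J. transfer_gain l acc v)"
    by (simp add: sum.reindex[OF \<open>inj_on r J\<close>] sum_distrib_left)
  also have "\<dots> \<le> 8 * (\<Sum>v\<in>V. transfer_gain l acc v)"
    using G r transfer_gain_nonneg[OF VA] unfolding is_graph_def
    by (intro mult_left_mono sum_mono2) auto
  finally show ?thesis unfolding J_def .
qed

lemma square_sum_div_le_sum_large_squares: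
  fixes e :: "nat \<Rightarrow> int"
  assumes "2 * int D \<le> (\<Sum>j<D. e j)"
  shows "(real_of_int (\<Sum>j<D. e j))\<^sup>2 / real D \<le> real_of_int (\<Sum>j | j < D \<and> 2 \<le> e j. (e j)\<^sup>2)"
proof (cases "D = 0")
  case False
  define K where "K = real_of_int (\<Sum>j<D. e j)"
  define a where "a = K / real D"
  have "real_of_int (2 * int D) \<le> K" unfolding K_def using assms by (simp only: of_int_le_iff)
  then have "2 \<le> a" using False unfolding a_def by (simp add: field_simps)
  \<comment> \<open>tangent line of \<open>x\<^sup>2\<close> at the average \<open>a\<close>; it lies below \<open>0\<close> for \<open>x \<le> 1\<close> because \<open>a \<ge> 2\<close>\<close>
  have tangent: "2 * a * real_of_int (e j) - a\<^sup>2 \<le> (if 2 \<le> e j then (real_of_int (e j))\<^sup>2 else 0)" for j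
  proof (cases "2 \<le> e j")
    case True
    have "0 \<le> (real_of_int (e j) - a)\<^sup>2" by simp
    then show ?thesis using True by (simp add: power2_eq_square algebra_simps)
  next
    case False
    then have "2 * a * real_of_int (e j) \<le> 2 * a * 1" using \<open>2 \<le> a\<close> by simp
    also have "\<dots> \<le> a\<^sup>2" using \<open>2 \<le> a\<close> by (simp add: power2_eq_square)
    finally show ?thesis using False by simp
  qed
  have "K\<^sup>2 / real D = 2 * a * K - real D * a\<^sup>2"
    using False unfolding a_def by (simp add: field_simps power2_eq_square)
  also have "\<dots> = (\<Sum>j<D. 2 * a * real_of_int (e j) - a\<^sup>2)"
    unfolding K_def by (simp add: sum_subtractf sum_distrib_left)
  also have "\<dots> \<le> (\<Sum>j<D. if 2 \<le> e j then (real_of_int (e j))\<^sup>2 else 0)"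
    by (intro sum_mono tangent)
  also have "\<dots> = real_of_int (\<Sum>j | j < D \<and> 2 \<le> e j. (e j)\<^sup>2)"
    by (simp add: sum.inter_filter[symmetric] of_int_sum lessThan_def)
  finally show ?thesis unfolding K_def .
qed simp

theorem lemma5:
  fixes V :: "'a set" and E :: "'a \<Rightarrow> 'a \<Rightarrow> bool" and nb :: "'a \<Rightarrow> 'a list"
    and l :: "'a \<Rightarrow> int" and acc :: "'a \<Rightarrow> 'a option"
  assumes "is_graph V E" and "connected_graph V E" and "card V \<ge> 2"
    and "nbr_order V E nb"
    and "\<forall>u\<in>V. l u \<ge> 0"
    and "valid_accept V nb l acc"
    and "discrepancy V l \<ge> 2 * int (diameter V E)"
  shows "potential V l - potential V (round_step nb l acc)
           \<ge> real_of_int (discrepancy V l) ^ 2 / (8 * real (diameter V E))"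
proof -
  define D where "D = diameter V E"
  have "finite V" "V \<noteq> {}" using assms(1,3) unfolding is_graph_def by auto
  then have "Max (l ` V) \<in> l ` V" by simp
  then obtain u where u: "u \<in> V" "l u = Max (l ` V)" by auto
  define gap where "gap j = min_load E l u j - min_load E l u (Suc j)" for j
  have "(\<Sum>j<D. gap j) = min_load E l u 0 - min_load E l u D"
    unfolding gap_def by (rule sum_lessThan_telescope')
  also have "\<dots> = discrepancy V l"
    using u hop_ball_diameter[OF assms(1,2) u(1)]
    unfolding discrepancy_def min_load_def D_def by simp
  finally have "(\<Sum>j<D. gap j) = discrepancy V l" .
  then have "(real_of_int (discrepancy V l))\<^sup>2 / real D
      \<le> real_of_int (\<Sum>j | j < D \<and> 2 \<le> gap j. (gap j)\<^sup>2)"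
    using square_sum_div_le_sum_large_squares[of D gap] assms(7) unfolding D_def by simp
  also have "\<dots> \<le> real_of_int (8 * (\<Sum>v\<in>V. transfer_gain l acc v))"
    using sum_large_gaps_le_sum_gain[OF assms(1,4,6) u(1), of D]
    unfolding gap_def of_int_le_iff .
  finally have "(real_of_int (discrepancy V l))\<^sup>2 / (8 * real D)
      \<le> real_of_int (\<Sum>v\<in>V. transfer_gain l acc v)"
    by simp
  then show ?thesis
    using potential_decrease_ge_sum_gain[OF assms(1,4,6)] unfolding D_def by linarith
qed

end
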